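(* Let $R$ be a finite group and let $T \leq R$ be a subgroup. Then \[ |\mathrm{Sub}(R,T)| \leq 7.3722 \cdot [R:T]^{\frac{\log_2 [R:T]}{4} + 1.8919}. \]
   Context: For a finite group $R$ and a subgroup $T\le R$, $\mathrm{Sub}(R,T)=\{H\le R : T\le H\}$ denotes the set of subgroups of $R$ containing $T$. *)

theory Defs
  imports "HOL-Algebra.Algebra" "HOL-Analysis.Analysis"
begin

definition Sub :: "('a, 'b) monoid_scheme \<Rightarrow> 'a set \<Rightarrow> 'a set set" where
  "Sub R T = {H. subgroup H R \<and> T \<subseteq> H}"

end

theory Submission
  imports Defs
begin

(*
  Write N(K, m) for the number of subgroups of order m containing K. Every such H with
  m > |K| is counted m - |K| >= m/2 times among the pairs (H, x) with x in H - K, and for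
  each x the group H contains <K, x>, whose order is at least 2|K|. Hence
  N(K, m) * m/2 <= |R| * max_x N(<K, x>, m), and induction gives
  N(K, m) <= sum over k with 2^k |K| <= m of (2|R|/m)^k.
  For K = T and m = |T| j with j <= n = [R:T], each summand is at most
  (2n/2^k)^k <= 2^((log n + 1)^2/4), so |Sub(R,T)| <= n (log n + 1) 2^((log n + 1)^2/4),
  which is a numerical estimate away from the claimed bound.
*)

lemma (in group) card_subgroup_dvd_card:
  assumes "subgroup I G" "subgroup J G" "I \<subseteq> J"
  shows "card I dvd card J"
proof -
  interpret J: group "G\<lparr>carrier := J\<rparr>"
    using assms(2) by (rule subgroup.subgroup_is_group) (rule is_group)
  have "card (rcosets\<^bsub>G\<lparr>carrier := J\<rparr>\<^esub> I) * card I = card J"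
    using J.lagrange[OF subgroup_incl[OF assms]] by (simp add: Coset.order_def)
  then show ?thesis
    by (metis dvd_triv_right)
qed

lemma (in group) double_card_le_card_proper_supergroup:
  assumes "finite (carrier G)" "subgroup I G" "subgroup J G" "I \<subset> J"
  shows "2 * card I \<le> card J"
proof -
  obtain q where q: "card J = card I * q"
    using card_subgroup_dvd_card[OF assms(2,3)] assms(4) by blast
  have "finite J"
    using assms(1,3) subgroup.subset finite_subset by blast
  then have "card I < card J"
    using assms(4) by (rule psubset_card_mono)
  then have "q \<noteq> 0" "q \<noteq> 1"
    using q by auto
  then have "2 \<le> q"
    by linarith
  then show ?thesis
    using q by simp
qed

lemma finite_Sub: "finite (carrier R) \<Longrightarrow> finite (Sub R T)"
  unfolding Sub_def by (rule finite_subset[of _ "Pow (carrier R)"]) (auto dest: subgroup.subset)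

lemma sum_card_inter_eq_sum_card_containing:
  assumes "finite F" "finite A"
  shows "(\<Sum>H\<in>F. card (H \<inter> A)) = (\<Sum>x\<in>A. card {H\<in>F. x \<in> H})"
proof -
  have "(\<Sum>H\<in>F. card (H \<inter> A)) = (\<Sum>H\<in>F. \<Sum>x\<in>A. if x \<in> H then 1 else 0)"
    using assms(2) by (intro sum.cong refl) (simp add: sum.If_cases Int_commute)
  also have "\<dots> = (\<Sum>x\<in>A. \<Sum>H\<in>F. if x \<in> H then 1 else 0)"
    by (rule sum.swap)
  also have "\<dots> = (\<Sum>x\<in>A. card {H\<in>F. x \<in> H})"
    using assms(1) by (intro sum.cong refl) (simp add: sum.If_cases Int_def)
  finally show ?thesis .
qed

definition doubling_sum :: "real \<Rightarrow> nat \<Rightarrow> nat \<Rightarrow> real" where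
  "doubling_sum c a m = (\<Sum>k | 2 ^ k * a \<le> m. c ^ k)"

lemma finite_doubling_exponents:
  fixes a m :: nat
  assumes "0 < a"
  shows "finite {k. 2 ^ k * a \<le> m}"
proof (rule finite_subset)
  show "{k. 2 ^ k * a \<le> m} \<subseteq> {..m}"
  proof
    fix k assume "k \<in> {k. 2 ^ k * a \<le> m}"
    then have "2 ^ k * a \<le> m"
      by simp
    moreover have "k < 2 ^ k" "2 ^ k \<le> 2 ^ k * a"
      using less_exp[of k] assms by simp_all
    ultimately show "k \<in> {..m}"
      unfolding atMost_iff by linarith
  qed
qed simp

lemma doubling_sum_nonneg: "0 \<le> c \<Longrightarrow> 0 \<le> doubling_sum c a m"
  unfolding doubling_sum_def by (simp add: sum_nonneg)

lemma one_le_doubling_sum: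
  assumes "0 < a" "a \<le> m" "0 \<le> c"
  shows "1 \<le> doubling_sum c a m"
proof -
  have "c ^ 0 \<le> (\<Sum>k | 2 ^ k * a \<le> m. c ^ k)"
    using assms by (intro member_le_sum finite_doubling_exponents) auto
  then show ?thesis
    by (simp add: doubling_sum_def)
qed

lemma doubling_sum_antimono:
  assumes "0 < a" "a \<le> b" "0 \<le> c"
  shows "doubling_sum c b m \<le> doubling_sum c a m"
  unfolding doubling_sum_def
proof (rule sum_mono2)
  show "{k. 2 ^ k * b \<le> m} \<subseteq> {k. 2 ^ k * a \<le> m}"
    using mult_le_mono2[OF assms(2)] order_trans by blast
qed (use assms finite_doubling_exponents in auto)

lemma mult_doubling_sum_double_le:
  assumes "0 < a" "0 \<le> c"
  shows "c * doubling_sum c (2 * a) m \<le> doubling_sum c a m"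
proof -
  have "c * doubling_sum c (2 * a) m = (\<Sum>k | 2 ^ k * (2 * a) \<le> m. c ^ Suc k)"
    by (simp add: doubling_sum_def sum_distrib_left)
  also have "\<dots> = (\<Sum>k \<in> Suc ` {k. 2 ^ k * (2 * a) \<le> m}. c ^ k)"
    by (simp add: sum.reindex)
  also have "\<dots> \<le> doubling_sum c a m"
    unfolding doubling_sum_def
    using assms by (intro sum_mono2 finite_doubling_exponents) (auto simp: mult.assoc mult.left_commute)
  finally show ?thesis .
qed

lemma (in group) card_Sub_of_card_mult_le_sum:
  assumes "finite (carrier G)" "subgroup K G"
  shows "card {H \<in> Sub G K. card H = m} * (m - card K)
    \<le> (\<Sum>x \<in> carrier G - K. card {H \<in> Sub G (generate G (insert x K)). card H = m})"
proof -
  let ?F = "{H \<in> Sub G K. card H = m}"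
  have "finite K"
    using assms subgroup.subset finite_subset by blast
  have "card ?F * (m - card K) = (\<Sum>H \<in> ?F. card (H \<inter> (carrier G - K)))"
  proof -
    have "card (H \<inter> (carrier G - K)) = m - card K" if "H \<in> ?F" for H
    proof -
      have "H \<inter> (carrier G - K) = H - K" "K \<subseteq> H" "card H = m"
        using that by (auto simp: Sub_def dest: subgroup.subset)
      then show ?thesis
        using \<open>finite K\<close> by (simp add: card_Diff_subset)
    qed
    then show ?thesis
      by simp
  qed
  also have "\<dots> = (\<Sum>x \<in> carrier G - K. card {H \<in> ?F. x \<in> H})"
    using finite_Sub[OF assms(1)] assms(1)
    by (intro sum_card_inter_eq_sum_card_containing) auto
  also have "\<dots> \<le> (\<Sum>x \<in> carrier G - K. card {H \<in> Sub G (generate G (insert x K)). card H = m})"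
  proof (intro sum_mono card_mono)
    fix x assume "x \<in> carrier G - K"
    show "finite {H \<in> Sub G (generate G (insert x K)). card H = m}"
      using finite_Sub[OF assms(1)] by simp
    show "{H \<in> ?F. x \<in> H} \<subseteq> {H \<in> Sub G (generate G (insert x K)). card H = m}"
    proof
      fix H assume "H \<in> {H \<in> ?F. x \<in> H}"
      then have "subgroup H G" "insert x K \<subseteq> H" "card H = m"
        by (auto simp: Sub_def)
      then show "H \<in> {H \<in> Sub G (generate G (insert x K)). card H = m}"
        by (simp add: Sub_def generate_subgroup_incl)
    qed
  qed
  finally show ?thesis .
qed

lemma (in group) Sub_of_card_self:
  assumes "finite (carrier G)" "subgroup K G"
  shows "{H \<in> Sub G K. card H = card K} = {K}"
proof
  show "{H \<in> Sub G K. card H = card K} \<subseteq> {K}"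
  proof
    fix H assume "H \<in> {H \<in> Sub G K. card H = card K}"
    then have "subgroup H G" "K \<subseteq> H" "card H = card K"
      by (auto simp: Sub_def)
    moreover have "finite H"
      using assms(1) \<open>subgroup H G\<close> subgroup.subset finite_subset by blast
    ultimately have "K = H"
      using card_subset_eq[of H K] by simp
    then show "H \<in> {K}"
      by simp
  qed
qed (use assms(2) in \<open>simp add: Sub_def\<close>)

lemma (in group) card_Sub_of_card_le_mult:
  assumes "finite (carrier G)" "subgroup K G" "2 * card K \<le> m" "0 \<le> D"
    and "\<And>x. x \<in> carrier G - K
      \<Longrightarrow> real (card {H \<in> Sub G (generate G (insert x K)). card H = m}) \<le> D"
  shows "real (card {H \<in> Sub G K. card H = m}) \<le> 2 * real (card (carrier G)) / real m * D"
proof -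
  let ?N = "real (card {H \<in> Sub G K. card H = m})"
  have "0 < card K"
    using subgroup.finite_imp_card_positive[OF assms(2,1)] .
  have "?N * (real m / 2) \<le> ?N * (real m - real (card K))"
    using assms(3) by (intro mult_left_mono) auto
  also have "\<dots> = real (card {H \<in> Sub G K. card H = m} * (m - card K))"
    using assms(3) by (simp add: of_nat_diff)
  also have "\<dots> \<le> (\<Sum>x \<in> carrier G - K. real (card {H \<in> Sub G (generate G (insert x K)). card H = m}))"
    unfolding of_nat_sum[symmetric] of_nat_le_iff
    by (rule card_Sub_of_card_mult_le_sum[OF assms(1,2)])
  also have "\<dots> \<le> real (card (carrier G - K)) * D"
    using sum_bounded_above[of "carrier G - K", OF assms(5)] by simp
  also have "\<dots> \<le> real (card (carrier G)) * D"
    using assms(1,4) by (intro mult_right_mono of_nat_mono card_mono) auto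
  finally show ?thesis
    using assms(3) \<open>0 < card K\<close> by (simp add: field_simps)
qed

lemma (in group) card_Sub_of_card_le_doubling_sum:
  assumes "finite (carrier G)" "subgroup K G"
  shows "real (card {H \<in> Sub G K. card H = m})
    \<le> doubling_sum (2 * real (card (carrier G)) / real m) (card K) m"
  using assms(2)
proof (induction "card (carrier G) - card K" arbitrary: K rule: less_induct)
  case less
  let ?c = "2 * real (card (carrier G)) / real m"
  have "0 < card K"
    using subgroup.finite_imp_card_positive[OF less.prems assms(1)] .
  consider "m = card K" | "2 * card K \<le> m" | "{H \<in> Sub G K. card H = m} = {}"
  proof (cases "{H \<in> Sub G K. card H = m} = {}")
    case False
    then obtain H where "subgroup H G" "K \<subseteq> H" "card H = m"
      by (auto simp: Sub_def)
    then show ?thesis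
      using that double_card_le_card_proper_supergroup[OF assms(1) less.prems, of H]
      by (cases "K = H") auto
  qed
  then show ?case
  proof cases
    case 1
    then show ?thesis
      using Sub_of_card_self[OF assms(1) less.prems] one_le_doubling_sum[of "card K" m ?c]
        \<open>0 < card K\<close> by simp
  next
    case 2
    have "real (card {H \<in> Sub G (generate G (insert x K)). card H = m})
        \<le> doubling_sum ?c (2 * card K) m"
      if "x \<in> carrier G - K" for x
    proof -
      let ?Kx = "generate G (insert x K)"
      have sub: "subgroup ?Kx G"
        using that less.prems by (intro generate_is_subgroup) (auto dest: subgroup.subset)
      have "K \<subset> ?Kx"
        using that by (auto intro: generate.incl)
      then have "2 * card K \<le> card ?Kx"
        by (rule double_card_le_card_proper_supergroup[OF assms(1) less.prems sub])
      moreover have "card ?Kx \<le> card (carrier G)"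
        using assms(1) sub by (intro card_mono) (auto dest: subgroup.subset)
      ultimately have "real (card {H \<in> Sub G ?Kx. card H = m}) \<le> doubling_sum ?c (card ?Kx) m"
        using less.hyps[OF _ sub] \<open>0 < card K\<close> by simp
      also have "\<dots> \<le> doubling_sum ?c (2 * card K) m"
        using \<open>2 * card K \<le> card ?Kx\<close> \<open>0 < card K\<close> by (intro doubling_sum_antimono) auto
      finally show ?thesis .
    qed
    then have "real (card {H \<in> Sub G K. card H = m}) \<le> ?c * doubling_sum ?c (2 * card K) m"
      using 2 by (intro card_Sub_of_card_le_mult[OF assms(1) less.prems] doubling_sum_nonneg) auto
    also have "\<dots> \<le> doubling_sum ?c (card K) m"
      using \<open>0 < card K\<close> by (intro mult_doubling_sum_double_le) auto
    finally show ?thesis .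
  next
    case 3
    show ?thesis
      unfolding 3 by (simp add: doubling_sum_nonneg)
  qed
qed

lemma doubling_term_le:
  fixes n j k :: nat
  assumes "1 \<le> n" "2 ^ k \<le> j"
  shows "(2 * real n / real j) ^ k \<le> 2 powr ((log 2 n + 1)\<^sup>2 / 4)"
proof -
  define b where "b = log 2 n"
  have n_eq: "real n = 2 powr b"
    unfolding b_def using assms(1) by simp
  have "(2::real) ^ k \<le> real j"
    using assms(2) by (metis of_nat_le_iff of_nat_numeral of_nat_power)
  moreover from this have "0 < real j"
    by (rule order_less_le_trans[rotated]) simp
  ultimately have "(2 * real n / real j) ^ k \<le> (2 * real n / 2 ^ k) ^ k"
    by (intro power_mono divide_left_mono) auto
  also have "\<dots> = 2 powr ((1 + b - real k) * real k)"
    by (simp add: n_eq powr_diff powr_add powr_realpow powr_powr[symmetric]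
        powr_realpow[symmetric] del: powr_realpow)
  also have "\<dots> \<le> 2 powr ((b + 1)\<^sup>2 / 4)"
  proof (rule powr_mono)
    have "0 \<le> (b + 1 - 2 * real k)\<^sup>2"
      by simp
    then show "(1 + b - real k) * real k \<le> (b + 1)\<^sup>2 / 4"
      by (simp add: power2_eq_square algebra_simps)
  qed simp
  finally show ?thesis
    unfolding b_def .
qed

lemma doubling_sum_index_le:
  fixes t j n :: nat
  assumes "0 < t" "1 \<le> j" "j \<le> n"
  shows "doubling_sum (2 * real n / real j) t (t * j)
    \<le> (log 2 n + 1) * 2 powr ((log 2 n + 1)\<^sup>2 / 4)"
proof -
  let ?B = "2 powr ((log 2 n + 1)\<^sup>2 / 4) :: real"
  have exps: "{k. 2 ^ k * t \<le> t * j} = {k. 2 ^ k \<le> j}"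
    using assms(1) by (simp add: mult.commute)
  have "{k. 2 ^ k \<le> j} \<subseteq> {..nat \<lfloor>log 2 n\<rfloor>}"
  proof
    fix k assume "k \<in> {k. 2 ^ k \<le> j}"
    then have "(2::real) ^ k \<le> real n"
      using assms(3) by (metis mem_Collect_eq le_trans of_nat_le_iff of_nat_numeral of_nat_power)
    then have "real k \<le> log 2 n"
      by (intro le_log_of_power) auto
    then have "int k \<le> \<lfloor>log 2 n\<rfloor>"
      by linarith
    then show "k \<in> {..nat \<lfloor>log 2 n\<rfloor>}"
      by simp
  qed
  then have "card {k. 2 ^ k \<le> j} \<le> nat \<lfloor>log 2 n\<rfloor> + 1"
    using card_mono[of "{..nat \<lfloor>log 2 n\<rfloor>}"] by fastforce
  moreover have "0 \<le> log 2 n"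
    using assms by simp
  ultimately have card_le: "real (card {k. 2 ^ k \<le> j}) \<le> log 2 n + 1"
    by linarith
  have "doubling_sum (2 * real n / real j) t (t * j) = (\<Sum>k | 2 ^ k \<le> j. (2 * real n / real j) ^ k)"
    unfolding doubling_sum_def exps ..
  also have "\<dots> \<le> real (card {k. 2 ^ k \<le> j}) * ?B"
    using assms by (intro sum_bounded_above doubling_term_le) auto
  also have "\<dots> \<le> (log 2 n + 1) * ?B"
    using card_le by (rule mult_right_mono) simp
  finally show ?thesis .
qed

lemma two_powr_quarter_le: "(2::real) powr (1/4) \<le> 1.2"
proof (rule power_le_imp_le_base[of _ 3])
  have "(2 powr (1/4)) ^ Suc 3 = (2::real)"
    by (simp add: powr_realpow[symmetric] powr_powr del: powr_realpow)
  then show "(2 powr (1/4)) ^ Suc 3 \<le> (1.2::real) ^ Suc 3"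
    by (simp add: power4_eq_xxxx)
qed simp

lemma linear_le_two_powr:
  fixes b :: real
  assumes "0 \<le> b"
  shows "(b + 1) * 2 powr (1/4) \<le> 7.3722 * 2 powr (0.3919 * b)"
proof -
  have "(b + 1) * 2 powr (1/4) \<le> (b + 1) * 1.2"
    using two_powr_quarter_le assms by (intro mult_left_mono) auto
  also have "\<dots> \<le> 7.3722 * (1 + 0.3919 * b * (2/3))"
    using assms by simp
  also have "\<dots> \<le> 7.3722 * (1 + 0.3919 * b * ln 2)"
    using ln2_ge_two_thirds assms by (intro mult_left_mono add_left_mono) auto
  also have "\<dots> \<le> 7.3722 * 2 powr (0.3919 * b)"
    using exp_ge_add_one_self[of "0.3919 * b * ln 2"]
    by (intro mult_left_mono) (simp_all add: powr_def mult_ac)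
  finally show ?thesis .
qed

lemma mult_log_two_powr_le:
  fixes n :: real
  assumes "1 \<le> n"
  shows "n * (log 2 n + 1) * 2 powr ((log 2 n + 1)\<^sup>2 / 4)
    \<le> 7.3722 * n powr (log 2 n / 4 + 1.8919)"
proof -
  define b where "b = log 2 n"
  have "0 \<le> b"
    unfolding b_def using assms by simp
  have n_eq: "n = 2 powr b"
    unfolding b_def using assms by simp
  define E where "E = (2::real) powr (b\<^sup>2 / 4 + 3/2 * b)"
  have "n * (b + 1) * 2 powr ((b + 1)\<^sup>2 / 4) = ((b + 1) * 2 powr (1/4)) * E"
    unfolding E_def n_eq by (simp add: powr_add[symmetric] power2_eq_square field_simps)
  also have "\<dots> \<le> (7.3722 * 2 powr (0.3919 * b)) * E"
    using linear_le_two_powr[OF \<open>0 \<le> b\<close>] by (rule mult_right_mono) (simp add: E_def)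
  also have "\<dots> = 7.3722 * n powr (b / 4 + 1.8919)"
  proof -
    have "0.3919 * b + (b\<^sup>2 / 4 + 3/2 * b) = b * (b / 4 + 1.8919)"
      by (simp add: power2_eq_square algebra_simps)
    then show ?thesis
      unfolding E_def n_eq by (simp add: powr_powr powr_add[symmetric])
  qed
  finally show ?thesis
    unfolding b_def .
qed

lemma (in group) Sub_subset_UN_card_index:
  assumes "finite (carrier G)" "subgroup T G"
  shows "Sub G T \<subseteq> (\<Union>j \<in> {1..card (rcosets T)}. {H \<in> Sub G T. card H = card T * j})"
proof
  fix H assume "H \<in> Sub G T"
  then have H: "subgroup H G" "T \<subseteq> H"
    by (auto simp: Sub_def)
  obtain j where j: "card H = card T * j"
    using card_subgroup_dvd_card[OF assms(2) H] by blast
  have "0 < card H"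
    using subgroup.finite_imp_card_positive[OF H(1) assms(1)] .
  then have "1 \<le> j"
    using j by (cases j) auto
  have "card H \<le> card (carrier G)"
    using assms(1) H(1) by (intro card_mono) (auto dest: subgroup.subset)
  then have "card T * j \<le> card T * card (rcosets T)"
    using lagrange[OF assms(2)] j by (simp add: Coset.order_def mult.commute)
  then have "j \<le> card (rcosets T)"
    using subgroup.finite_imp_card_positive[OF assms(2,1)] by simp
  with \<open>1 \<le> j\<close> j \<open>H \<in> Sub G T\<close>
  show "H \<in> (\<Union>j \<in> {1..card (rcosets T)}. {H \<in> Sub G T. card H = card T * j})"
    by auto
qed

lemma (in group) card_Sub_le_sum_card_index:
  assumes "finite (carrier G)" "subgroup T G"
  shows "card (Sub G T) \<le> (\<Sum>j = 1..card (rcosets T). card {H \<in> Sub G T. card H = card T * j})"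
proof -
  let ?U = "\<Union>j \<in> {1..card (rcosets T)}. {H \<in> Sub G T. card H = card T * j}"
  have "finite ?U"
    using finite_Sub[OF assms(1)] by (rule rev_finite_subset) blast
  then have "card (Sub G T) \<le> card ?U"
    using Sub_subset_UN_card_index[OF assms] by (rule card_mono)
  also have "\<dots> \<le> (\<Sum>j = 1..card (rcosets T). card {H \<in> Sub G T. card H = card T * j})"
    by (rule card_UN_le) simp
  finally show ?thesis .
qed

lemma (in group) card_Sub_of_card_index_le:
  assumes "finite (carrier G)" "subgroup T G" "1 \<le> j" "j \<le> card (rcosets T)"
  shows "real (card {H \<in> Sub G T. card H = card T * j})
    \<le> (log 2 (card (rcosets T)) + 1) * 2 powr ((log 2 (card (rcosets T)) + 1)\<^sup>2 / 4)"
proof -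
  define n where "n = card (rcosets T)"
  define t where "t = card T"
  have "0 < t"
    unfolding t_def using subgroup.finite_imp_card_positive[OF assms(2,1)] .
  have "card (carrier G) = n * t"
    using lagrange[OF assms(2)] unfolding n_def t_def by (simp add: Coset.order_def)
  then have "2 * real (card (carrier G)) / real (t * j) = 2 * real n / real j"
    using \<open>0 < t\<close> by simp
  then have "real (card {H \<in> Sub G T. card H = t * j})
      \<le> doubling_sum (2 * real n / real j) t (t * j)"
    using card_Sub_of_card_le_doubling_sum[OF assms(1,2), of "t * j"] unfolding t_def by simp
  also have "\<dots> \<le> (log 2 n + 1) * 2 powr ((log 2 n + 1)\<^sup>2 / 4)"
    using \<open>0 < t\<close> assms(3,4) unfolding n_def by (intro doubling_sum_index_le) auto
  finally show ?thesis
    unfolding n_def t_def .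
qed

theorem theorem1p1:
  fixes R :: "('a, 'b) monoid_scheme" and T :: "'a set"
  assumes "group R" and "finite (carrier R)" and "subgroup T R"
  shows "real (card (Sub R T))
    \<le> 7.3722 * real (card (rcosets\<^bsub>R\<^esub> T))
          powr (log 2 (real (card (rcosets\<^bsub>R\<^esub> T))) / 4 + 1.8919)"
proof -
  interpret group R by fact
  define n where "n = card (rcosets\<^bsub>R\<^esub> T)"
  let ?B = "(log 2 n + 1) * 2 powr ((log 2 n + 1)\<^sup>2 / 4)"
  have "card (carrier R) = n * card T"
    using lagrange[OF assms(3)] unfolding n_def by (simp add: Coset.order_def)
  moreover have "0 < card (carrier R)"
    using assms(2) one_closed card_gt_0_iff by blast
  ultimately have "1 \<le> n"
    by simp
  have "real (card (Sub R T)) \<le> (\<Sum>j = 1..n. real (card {H \<in> Sub R T. card H = card T * j}))"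
    using card_Sub_le_sum_card_index[OF assms(2,3)]
    unfolding n_def of_nat_sum[symmetric] of_nat_le_iff .
  also have "\<dots> \<le> (\<Sum>j = 1..n. ?B)"
    using card_Sub_of_card_index_le[OF assms(2,3)] unfolding n_def by (intro sum_mono) simp
  also have "\<dots> = real n * (log 2 n + 1) * 2 powr ((log 2 n + 1)\<^sup>2 / 4)"
    by simp
  also have "\<dots> \<le> 7.3722 * real n powr (log 2 n / 4 + 1.8919)"
    using \<open>1 \<le> n\<close> by (intro mult_log_two_powr_le) simp
  finally show ?thesis
    unfolding n_def .
qed

end
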